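(* Let $X$ be a compact metric space with metric $d$. If a homeomorphism $f\colon X\to X$ has the contractive shadowing property, then $X$ is a finite set.
   Context: For $\delta>0$, a sequence $(x_i)_{i\ge0}$ is a $\delta$-pseudo orbit of $f$ if $d(f(x_i),x_{i+1})\le\delta$ for all $i\ge0$; it is $\epsilon$-shadowed by $x$ if $d(f^i(x),x_i)\le\epsilon$ for all $i\ge0$. For $L>0$, $f$ has the $L$-Lipschitz shadowing property if there is $\delta_0>0$ such that for every $0<\delta\le\delta_0$, every $\delta$-pseudo orbit of $f$ is $L\delta$-shadowed by some point of $X$. $f$ has the contractive shadowing property if it has the $L$-Lipschitz shadowing property for some $0<L<1$. *)

theory Defs
  imports "HOL-Analysis.Analysis"
begin

text \<open>The space X is modelled as a set S in a metric space type; f maps S to S.\<close>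

definition pseudo_orbit :: "'a::metric_space set \<Rightarrow> ('a \<Rightarrow> 'a) \<Rightarrow> real \<Rightarrow> (nat \<Rightarrow> 'a) \<Rightarrow> bool" where
  "pseudo_orbit S f \<delta> xs \<longleftrightarrow> (\<forall>i. xs i \<in> S) \<and> (\<forall>i. dist (f (xs i)) (xs (Suc i)) \<le> \<delta>)"

definition shadowed_by :: "('a::metric_space \<Rightarrow> 'a) \<Rightarrow> real \<Rightarrow> (nat \<Rightarrow> 'a) \<Rightarrow> 'a \<Rightarrow> bool" where
  "shadowed_by f \<epsilon> xs x \<longleftrightarrow> (\<forall>i. dist ((f ^^ i) x) (xs i) \<le> \<epsilon>)"

definition lipschitz_shadowing :: "'a::metric_space set \<Rightarrow> ('a \<Rightarrow> 'a) \<Rightarrow> real \<Rightarrow> bool" where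
  "lipschitz_shadowing S f L \<longleftrightarrow>
     (\<exists>\<delta>0>0. \<forall>\<delta>. 0 < \<delta> \<and> \<delta> \<le> \<delta>0 \<longrightarrow>
        (\<forall>xs. pseudo_orbit S f \<delta> xs \<longrightarrow> (\<exists>x\<in>S. shadowed_by f (L * \<delta>) xs x)))"

definition contractive_shadowing :: "'a::metric_space set \<Rightarrow> ('a \<Rightarrow> 'a) \<Rightarrow> bool" where
  "contractive_shadowing S f \<longleftrightarrow> (\<exists>L. 0 < L \<and> L < 1 \<and> lipschitz_shadowing S f L)"

end

theory Submission
  imports Defs
begin

text \<open>Shadowing a pseudo-orbit that follows the orbit of one point and then jumps onto the
orbit of another produces a true orbit that makes both ends match better by the factor \<open>L\<close>.
Moving the jump backwards one step at a time, a \<open>\<delta>\<^sub>0\<close>-gap between \<open>f\<^sup>k a\<close> and \<open>f\<^sup>k b\<close> shrinks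
to an \<open>L\<^sup>k \<delta>\<^sub>0\<close>-gap between \<open>f\<^sup>k z\<close> and \<open>f\<^sup>k b\<close> for some \<open>z\<close> that is \<open>L\<^sup>k \<delta>\<^sub>0\<close>-close to \<open>a\<close>;
keeping the jump fixed instead and using compactness closes such a gap completely at a
geometric cost, which by injectivity lands exactly on \<open>b\<close>. Hence \<open>d(a,b) \<le> L\<^sup>k \<delta>\<^sub>0/(1-L)\<close>
whenever \<open>d(f\<^sup>k a, f\<^sup>k b) \<le> \<delta>\<^sub>0\<close>. Cover the compact space by \<open>N\<close> balls of radius \<open>\<delta>\<^sub>0/2\<close>: among
any \<open>N+1\<close> points, for every \<open>k\<close> two have \<open>k\<close>-th images in a common ball and so lie within
\<open>L\<^sup>k \<delta>\<^sub>0/(1-L)\<close> of each other. Letting \<open>k\<close> grow, two of them coincide, so the space has at most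
\<open>N\<close> points.\<close>

lemma funpow_mem:
  assumes "f ` S \<subseteq> S" "x \<in> S"
  shows "(f ^^ n) x \<in> S"
  using assms by (induction n) auto

lemma homeomorphism_funpow:
  assumes "homeomorphism S S f g"
  shows "homeomorphism S S (f ^^ n) (g ^^ n)"
proof (induction n)
  case 0
  show ?case using homeomorphism_ident by (simp add: id_def)
next
  case (Suc n)
  have "homeomorphism S S (f \<circ> f ^^ n) (g ^^ n \<circ> g)"
    using homeomorphism_compose[OF Suc.IH assms] .
  then show ?case by (simp only: funpow_Suc_right[of n g, symmetric] funpow.simps(2))
qed

definition splice_orbit :: "('a \<Rightarrow> 'a) \<Rightarrow> 'a \<Rightarrow> nat \<Rightarrow> (nat \<Rightarrow> 'a) \<Rightarrow> nat \<Rightarrow> 'a" where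
  "splice_orbit f x n s = (\<lambda>i. if i < n then (f ^^ i) x else s (i - n))"

lemma pseudo_orbit_orbit:
  assumes "f ` S \<subseteq> S" "x \<in> S" "0 \<le> \<eta>"
  shows "pseudo_orbit S f \<eta> (\<lambda>i. (f ^^ i) x)"
  using assms funpow_mem[OF assms(1,2)] by (simp add: pseudo_orbit_def)

lemma pseudo_orbit_splice_orbit:
  assumes fS: "f ` S \<subseteq> S" and x: "x \<in> S" and "0 \<le> \<eta>" and s: "pseudo_orbit S f \<eta> s"
    and jump: "0 < n \<Longrightarrow> dist ((f ^^ n) x) (s 0) \<le> \<eta>"
  shows "pseudo_orbit S f \<eta> (splice_orbit f x n s)"
  unfolding pseudo_orbit_def
proof (intro conjI allI)
  fix i
  show "splice_orbit f x n s i \<in> S"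
    using funpow_mem[OF fS x] s by (simp add: splice_orbit_def pseudo_orbit_def)
  consider "Suc i < n" | "Suc i = n" | "n \<le> i" by linarith
  then show "dist (f (splice_orbit f x n s i)) (splice_orbit f x n s (Suc i)) \<le> \<eta>"
  proof cases
    case 1
    then show ?thesis using \<open>0 \<le> \<eta>\<close> by (simp add: splice_orbit_def)
  next
    case 2
    then show ?thesis using jump by (auto simp: splice_orbit_def)
  next
    case 3
    then have "Suc i - n = Suc (i - n)" by simp
    then show ?thesis using 3 s by (simp add: splice_orbit_def pseudo_orbit_def)
  qed
qed

locale contractive_shadowing_system =
  fixes S :: "'a::metric_space set" and f :: "'a \<Rightarrow> 'a" and L \<delta>\<^sub>0 :: real
  assumes maps_into: "f ` S \<subseteq> S"
    and L_pos: "0 < L" and L_less_1: "L < 1" and \<delta>\<^sub>0_pos: "0 < \<delta>\<^sub>0"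
    and shadowing: "\<And>\<delta> xs. 0 < \<delta> \<Longrightarrow> \<delta> \<le> \<delta>\<^sub>0 \<Longrightarrow> pseudo_orbit S f \<delta> xs \<Longrightarrow>
                      \<exists>x\<in>S. shadowed_by f (L * \<delta>) xs x"
begin

lemma geometric_scale_bounds:
  assumes "0 < \<delta>" "\<delta> \<le> \<delta>\<^sub>0"
  shows "0 < L ^ m * \<delta>" "L ^ m * \<delta> \<le> \<delta>\<^sub>0"
proof -
  have "L ^ m \<le> 1" using L_pos L_less_1 by (simp add: power_le_one)
  then have "L ^ m * \<delta> \<le> 1 * \<delta>" using assms(1) by (intro mult_right_mono) auto
  then show "L ^ m * \<delta> \<le> \<delta>\<^sub>0" using assms(2) by simp
  show "0 < L ^ m * \<delta>" using assms L_pos by simp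
qed

lemma shadow_splice_orbit:
  assumes "0 < \<eta>" "\<eta> \<le> \<delta>\<^sub>0" "x \<in> S" "pseudo_orbit S f \<eta> s" "0 < n"
    and "dist ((f ^^ n) x) (s 0) \<le> \<eta>"
  obtains z where "z \<in> S" "dist z x \<le> L * \<eta>" "\<And>i. dist ((f ^^ (n + i)) z) (s i) \<le> L * \<eta>"
proof -
  have "pseudo_orbit S f \<eta> (splice_orbit f x n s)"
    using assms by (intro pseudo_orbit_splice_orbit maps_into) auto
  then obtain z where "z \<in> S" and "shadowed_by f (L * \<eta>) (splice_orbit f x n s) z"
    using shadowing assms(1,2) by blast
  then have z: "dist ((f ^^ i) z) (splice_orbit f x n s i) \<le> L * \<eta>" for i
    by (simp add: shadowed_by_def)
  show thesis
  proof
    show "dist z x \<le> L * \<eta>" using z[of 0] \<open>0 < n\<close> by (simp add: splice_orbit_def)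
    show "dist ((f ^^ (n + i)) z) (s i) \<le> L * \<eta>" for i
      using z[of "n + i"] by (simp add: splice_orbit_def)
  qed fact
qed

text \<open>The jump is moved backwards: the pseudo-orbit shadowed in each step follows \<open>x\<close> for one
step, then the previous approximation \<open>z\<close>, then \<open>v\<close>.\<close>

lemma iterate_gap_shrinks:
  assumes "x \<in> S" "v \<in> S" "dist ((f ^^ n) x) v \<le> \<delta>\<^sub>0"
  shows "\<exists>z\<in>S. dist z x \<le> L ^ n * \<delta>\<^sub>0 \<and> dist ((f ^^ n) z) v \<le> L ^ n * \<delta>\<^sub>0"
  using assms(1,3)
proof (induction n arbitrary: x)
  case 0
  then show ?case using \<open>v \<in> S\<close> \<delta>\<^sub>0_pos by (intro bexI[of _ v]) (auto simp: dist_commute)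
next
  case (Suc n)
  define \<eta> where "\<eta> = L ^ n * \<delta>\<^sub>0"
  have \<eta>: "0 < \<eta>" "\<eta> \<le> \<delta>\<^sub>0" unfolding \<eta>_def using geometric_scale_bounds \<delta>\<^sub>0_pos by auto
  have "f x \<in> S" using Suc.prems(1) maps_into by blast
  moreover have "dist ((f ^^ n) (f x)) v \<le> \<delta>\<^sub>0" using Suc.prems(2) by (simp add: funpow_swap1)
  ultimately obtain z where z: "z \<in> S" "dist z (f x) \<le> \<eta>" "dist ((f ^^ n) z) v \<le> \<eta>"
    using Suc.IH unfolding \<eta>_def by blast
  define s where "s = splice_orbit f z n (\<lambda>i. (f ^^ i) v)"
  have s: "pseudo_orbit S f \<eta> s"
    unfolding s_def using z(1,3) \<eta> \<open>v \<in> S\<close> maps_into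
    by (intro pseudo_orbit_splice_orbit pseudo_orbit_orbit) auto
  have "dist ((f ^^ 1) x) (s 0) \<le> \<eta>"
  proof (cases n)
    case 0
    then show ?thesis using Suc.prems(2) by (simp add: s_def splice_orbit_def \<eta>_def)
  next
    case (Suc m)
    then show ?thesis using z(2) by (simp add: s_def splice_orbit_def dist_commute)
  qed
  then obtain z' where z': "z' \<in> S" "dist z' x \<le> L * \<eta>"
    and "\<And>i. dist ((f ^^ (1 + i)) z') (s i) \<le> L * \<eta>"
    using shadow_splice_orbit[OF \<eta> Suc.prems(1) s zero_less_one] by blast
  from this(3)[of n] have "dist ((f ^^ Suc n) z') v \<le> L * \<eta>"
    by (simp add: s_def splice_orbit_def)
  with z' show ?case by (auto simp: \<eta>_def mult.assoc)
qed

text \<open>Shadowing repeatedly with the jump kept at time \<open>n\<close> moves \<open>y\<close> by a geometric series;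
instead of passing to a limit, a minimiser of the gap over the resulting ball is taken.\<close>

lemma exact_preimage_nearby:
  assumes "compact S" "continuous_on S (f ^^ n)" "0 < n"
    and "0 < \<delta>" "\<delta> \<le> \<delta>\<^sub>0" and y: "y \<in> S" and w: "w \<in> S" and gap: "dist ((f ^^ n) y) w \<le> \<delta>"
  shows "\<exists>y'\<in>S. (f ^^ n) y' = w \<and> dist y y' \<le> L / (1 - L) * \<delta>"
proof -
  define c where "c = L / (1 - L) * \<delta>"
  have approx: "\<exists>x\<in>S. dist y x \<le> c * (1 - L ^ m) \<and> dist ((f ^^ n) x) w \<le> L ^ m * \<delta>" for m
  proof (induction m)
    case 0
    show ?case using y gap by auto
  next
    case (Suc m)
    then obtain x where x: "x \<in> S" "dist y x \<le> c * (1 - L ^ m)" "dist ((f ^^ n) x) w \<le> L ^ m * \<delta>"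
      by blast
    have \<eta>: "0 < L ^ m * \<delta>" "L ^ m * \<delta> \<le> \<delta>\<^sub>0"
      using geometric_scale_bounds \<open>0 < \<delta>\<close> \<open>\<delta> \<le> \<delta>\<^sub>0\<close> by auto
    have "dist ((f ^^ n) x) ((\<lambda>i. (f ^^ i) w) 0) \<le> L ^ m * \<delta>" using x(3) by simp
    then obtain x' where x': "x' \<in> S" "dist x' x \<le> L * (L ^ m * \<delta>)"
      "\<And>i. dist ((f ^^ (n + i)) x') ((f ^^ i) w) \<le> L * (L ^ m * \<delta>)"
      using shadow_splice_orbit[OF \<eta> x(1) pseudo_orbit_orbit[OF maps_into w less_imp_le[OF \<eta>(1)]]
          \<open>0 < n\<close>] by blast
    have "dist y x' \<le> dist y x + dist x' x" by (rule dist_triangle2)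
    also have "\<dots> \<le> c * (1 - L ^ m) + L * (L ^ m * \<delta>)" using x(2) x'(2) by linarith
    also have "\<dots> = c * (1 - L ^ Suc m)" using L_less_1 by (simp add: c_def field_simps)
    finally show ?case using x'(1) x'(3)[of 0] by auto
  qed
  define A where "A = S \<inter> cball y c"
  have "0 \<le> c" unfolding c_def using L_pos L_less_1 \<open>0 < \<delta>\<close> by simp
  then have "A \<noteq> {}" using y by (auto simp: A_def)
  moreover have "compact A" using \<open>compact S\<close> by (simp add: A_def compact_Int_closed)
  moreover have "continuous_on A (f ^^ n)"
    using assms(2) by (rule continuous_on_subset) (simp add: A_def)
  then have "continuous_on A (\<lambda>x. dist ((f ^^ n) x) w)"
    by (intro continuous_on_dist continuous_on_const)
  ultimately obtain x\<^sub>0 where x\<^sub>0: "x\<^sub>0 \<in> A" "\<And>x. x \<in> A \<Longrightarrow> dist ((f ^^ n) x\<^sub>0) w \<le> dist ((f ^^ n) x) w"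
    using continuous_attains_inf[of A "\<lambda>x. dist ((f ^^ n) x) w"] by blast
  have "dist ((f ^^ n) x\<^sub>0) w \<le> L ^ m * \<delta>" for m
  proof -
    obtain x where x: "x \<in> S" "dist y x \<le> c * (1 - L ^ m)" "dist ((f ^^ n) x) w \<le> L ^ m * \<delta>"
      using approx by blast
    have "c * (1 - L ^ m) \<le> c" using \<open>0 \<le> c\<close> L_pos by (simp add: mult_left_le)
    then have "x \<in> A" using x(1,2) by (simp add: A_def)
    then show ?thesis using x\<^sub>0(2) x(3) by fastforce
  qed
  moreover have "(\<lambda>m. L ^ m * \<delta>) \<longlonglongrightarrow> 0"
    using L_pos L_less_1 by (intro tendsto_mult_left_zero LIMSEQ_power_zero) simp
  ultimately have "dist ((f ^^ n) x\<^sub>0) w \<le> 0" using LIMSEQ_le_const by blast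
  then show ?thesis using x\<^sub>0(1) by (auto simp: A_def c_def)
qed

lemma backward_contraction:
  assumes "compact S" "continuous_on S (f ^^ k)" "inj_on (f ^^ k) S" "0 < k"
    and a: "a \<in> S" and b: "b \<in> S" and gap: "dist ((f ^^ k) a) ((f ^^ k) b) \<le> \<delta>\<^sub>0"
  shows "dist a b \<le> L ^ k * \<delta>\<^sub>0 / (1 - L)"
proof -
  define \<eta> where "\<eta> = L ^ k * \<delta>\<^sub>0"
  have \<eta>: "0 < \<eta>" "\<eta> \<le> \<delta>\<^sub>0" unfolding \<eta>_def using geometric_scale_bounds \<delta>\<^sub>0_pos by auto
  have fkb: "(f ^^ k) b \<in> S" using funpow_mem[OF maps_into b] .
  obtain z where z: "z \<in> S" "dist z a \<le> \<eta>" "dist ((f ^^ k) z) ((f ^^ k) b) \<le> \<eta>"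
    using iterate_gap_shrinks[OF a fkb gap] unfolding \<eta>_def by blast
  obtain y' where y': "y' \<in> S" "(f ^^ k) y' = (f ^^ k) b" "dist z y' \<le> L / (1 - L) * \<eta>"
    using exact_preimage_nearby[OF assms(1,2,4) \<eta> z(1) fkb z(3)] by blast
  have "y' = b" using \<open>inj_on (f ^^ k) S\<close> y'(1,2) b by (meson inj_onD)
  have "dist a b \<le> dist z a + dist z b" by (rule dist_triangle3)
  also have "\<dots> \<le> \<eta> + L / (1 - L) * \<eta>" using add_mono[OF z(2) y'(3)] \<open>y' = b\<close> by simp
  also have "\<dots> = L ^ k * \<delta>\<^sub>0 / (1 - L)" using L_less_1 by (simp add: \<eta>_def field_simps)
  finally show ?thesis .
qed


lemma close_iterates_imp_close:
  assumes "compact S" "homeomorphism S S f g" "0 < \<epsilon>"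
  obtains k where "\<forall>a\<in>S. \<forall>b\<in>S. dist ((f ^^ k) a) ((f ^^ k) b) < \<delta>\<^sub>0 \<longrightarrow> dist a b < \<epsilon>"
proof -
  have "(\<lambda>k. L ^ k * \<delta>\<^sub>0 / (1 - L)) \<longlonglongrightarrow> 0"
    using L_pos L_less_1 by (intro tendsto_divide_zero tendsto_mult_left_zero LIMSEQ_power_zero) simp
  then have "eventually (\<lambda>k. L ^ k * \<delta>\<^sub>0 / (1 - L) < \<epsilon>) sequentially"
    using \<open>0 < \<epsilon>\<close> by (rule order_tendstoD(2))
  then obtain N where N: "\<And>k. N \<le> k \<Longrightarrow> L ^ k * \<delta>\<^sub>0 / (1 - L) < \<epsilon>"
    unfolding eventually_sequentially by blast
  define k where "k = Suc N"
  have k: "0 < k" "L ^ k * \<delta>\<^sub>0 / (1 - L) < \<epsilon>" using N[of k] by (auto simp: k_def)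
  have "homeomorphism S S (f ^^ k) (g ^^ k)" by (rule homeomorphism_funpow[OF assms(2)])
  then have fk: "continuous_on S (f ^^ k)" "inj_on (f ^^ k) S"
    by (auto simp: homeomorphism_def intro: inj_on_inverseI)
  have "dist a b < \<epsilon>" if "a \<in> S" "b \<in> S" "dist ((f ^^ k) a) ((f ^^ k) b) < \<delta>\<^sub>0" for a b
    using backward_contraction[OF \<open>compact S\<close> fk k(1) that(1,2) less_imp_le[OF that(3)]] k(2)
    by linarith
  then show thesis using that by blast
qed
end

lemma contractive_shadowing_imp_system:
  assumes "contractive_shadowing S f" "f ` S \<subseteq> S"
  obtains L \<delta>\<^sub>0 where "contractive_shadowing_system S f L \<delta>\<^sub>0"
proof -
  obtain L where L: "0 < L" "L < 1" and "lipschitz_shadowing S f L"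
    using assms(1) unfolding contractive_shadowing_def by blast
  then obtain \<delta>\<^sub>0 where "0 < \<delta>\<^sub>0" and shadowing: "\<And>\<delta> xs. 0 < \<delta> \<Longrightarrow> \<delta> \<le> \<delta>\<^sub>0 \<Longrightarrow>
      pseudo_orbit S f \<delta> xs \<Longrightarrow> \<exists>x\<in>S. shadowed_by f (L * \<delta>) xs x"
    unfolding lipschitz_shadowing_def by blast
  have "contractive_shadowing_system S f L \<delta>\<^sub>0"
    using assms(2) L \<open>0 < \<delta>\<^sub>0\<close> shadowing by unfold_locales
  then show thesis by (rule that)
qed

lemma finite_imp_uniform_discrete:
  fixes F :: "'a::metric_space set"
  assumes "finite F"
  shows "uniform_discrete F"
  using assms by (induction rule: finite_induct) (simp_all add: uniform_discrete_insert)

lemma finite_if_close_images_have_close_points: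
  fixes S :: "'a::metric_space set"
  assumes "compact S" "0 < \<delta>"
    and pull: "\<And>\<epsilon>. 0 < \<epsilon> \<Longrightarrow>
                 \<exists>h. h ` S \<subseteq> S \<and> (\<forall>a\<in>S. \<forall>b\<in>S. dist (h a) (h b) < \<delta> \<longrightarrow> dist a b < \<epsilon>)"
  shows "finite S"
proof -
  have "0 < \<delta> / 2" using \<open>0 < \<delta>\<close> by simp
  then obtain C where C: "finite C" "S \<subseteq> (\<Union>c\<in>C. ball c (\<delta> / 2))"
    using seq_compact_imp_totally_bounded[OF compact_imp_seq_compact[OF \<open>compact S\<close>]] by blast
  have "card F \<le> card C" if F: "F \<subseteq> S" "finite F" for F
  proof -
    obtain \<epsilon> where "0 < \<epsilon>" and sep: "\<And>p q. p \<in> F \<Longrightarrow> q \<in> F \<Longrightarrow> dist p q < \<epsilon> \<Longrightarrow> p = q"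
      using finite_imp_uniform_discrete[OF F(2)] unfolding uniform_discrete_def by blast
    obtain h where h: "h ` S \<subseteq> S"
      and close: "\<forall>a\<in>S. \<forall>b\<in>S. dist (h a) (h b) < \<delta> \<longrightarrow> dist a b < \<epsilon>"
      using pull[OF \<open>0 < \<epsilon>\<close>] by blast
    have near: "\<forall>p\<in>F. \<exists>c. c \<in> C \<and> dist c (h p) < \<delta> / 2"
    proof
      fix p assume "p \<in> F"
      then have "h p \<in> S" using F(1) h by blast
      then obtain c where "c \<in> C" "h p \<in> ball c (\<delta> / 2)" using C(2) by blast
      then show "\<exists>c. c \<in> C \<and> dist c (h p) < \<delta> / 2" by auto
    qed
    obtain \<phi> where \<phi>: "\<forall>p\<in>F. \<phi> p \<in> C \<and> dist (\<phi> p) (h p) < \<delta> / 2"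
      using bchoice[OF near] by blast
    have "inj_on \<phi> F"
    proof (rule inj_onI)
      fix p q assume pq: "p \<in> F" "q \<in> F" "\<phi> p = \<phi> q"
      then have "dist (\<phi> p) (h p) < \<delta> / 2" "dist (\<phi> p) (h q) < \<delta> / 2" using \<phi> by auto
      then have "dist (h p) (h q) < \<delta>" by (rule dist_triangle_half_r)
      then have "dist p q < \<epsilon>" using close pq(1,2) F(1) by blast
      then show "p = q" using sep pq(1,2) by blast
    qed
    then show ?thesis using \<phi> C(1) by (intro card_inj_on_le) auto
  qed
  then show ?thesis using finite_if_finite_subsets_card_bdd[of S "card C"] by blast
qed

theorem theorem1p4:
  fixes S :: "'a::metric_space set" and f :: "'a \<Rightarrow> 'a"
  assumes "compact S"
    and "\<exists>g. homeomorphism S S f g"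
    and "contractive_shadowing S f"
  shows "finite S"
proof -
  obtain g where hom: "homeomorphism S S f g" using assms(2) by blast
  then have "f ` S \<subseteq> S" by (simp add: homeomorphism_def)
  with assms(3) obtain L \<delta>\<^sub>0 where "contractive_shadowing_system S f L \<delta>\<^sub>0"
    by (rule contractive_shadowing_imp_system)
  then interpret contractive_shadowing_system S f L \<delta>\<^sub>0 .
  show ?thesis
  proof (rule finite_if_close_images_have_close_points[OF \<open>compact S\<close> \<delta>\<^sub>0_pos])
    fix \<epsilon> :: real assume "0 < \<epsilon>"
    then obtain k where "\<forall>a\<in>S. \<forall>b\<in>S. dist ((f ^^ k) a) ((f ^^ k) b) < \<delta>\<^sub>0 \<longrightarrow> dist a b < \<epsilon>"
      using close_iterates_imp_close[OF \<open>compact S\<close> hom] by blast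
    moreover have "(f ^^ k) ` S \<subseteq> S" using funpow_mem[OF maps_into] by blast
    ultimately show "\<exists>h. h ` S \<subseteq> S \<and> (\<forall>a\<in>S. \<forall>b\<in>S. dist (h a) (h b) < \<delta>\<^sub>0 \<longrightarrow> dist a b < \<epsilon>)"
      by blast
  qed
qed

end
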